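(* Let $K>0$ and define $\beta_k=(K+1-k)^{-1/2}$ for integers $0\le k\le K$. Suppose a real sequence $(\gamma_k)$ satisfies $\gamma_0\ge\beta_0$ and $\gamma_{k+1}\ge\gamma_k+\gamma_k^3$ for all integers $0\le k\le K-1$. Then $\gamma_k\ge\beta_k$ for all integers $0\le k\le K$. *)

theory Defs
  imports Complex_Main
begin

end

theory Submission
  imports Defs
begin

text \<open>Write m = K + 1 - k, so that beta(k) = m^(-1/2) and beta(k+1) = (m - 1)^(-1/2).
  Since x + x^3 is increasing on [0, oo), an induction on k reduces the theorem to the
  one-step bound beta(k) + beta(k)^3 \<ge> beta(k+1). Squaring, this is
  (m + 1)^2 / m^3 \<ge> 1 / (m - 1), i.e. m^2 - m - 1 \<ge> 0, which holds because m \<ge> 2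
  whenever k < K.\<close>

lemma add_cube_mono:
  fixes b g :: real
  assumes "0 \<le> b" and "b \<le> g"
  shows "b + b ^ 3 \<le> g + g ^ 3"
  using assms power_mono[of b g 3] by linarith

lemma inverse_square_pred_le:
  fixes m :: real
  assumes "m \<ge> 2"
  shows "1 / (m - 1) \<le> (1 / m) * (1 + 1 / m) ^ 2"
proof -
  have "m ^ 3 \<le> (m + 1) ^ 2 * (m - 1)"
  proof -
    have "(m + 1) ^ 2 * (m - 1) - m ^ 3 = m * (m - 2) + (m - 1)"
      by (simp add: power2_eq_square power3_eq_cube algebra_simps)
    moreover have "m * (m - 2) \<ge> 0" using assms by simp
    ultimately show ?thesis using assms by linarith
  qed
  hence "m ^ 3 / (m ^ 3 * (m - 1)) \<le> (m + 1) ^ 2 * (m - 1) / (m ^ 3 * (m - 1))"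
    using assms by (intro divide_right_mono) auto
  moreover have "m ^ 3 / (m ^ 3 * (m - 1)) = 1 / (m - 1)"
    using assms by simp
  moreover have "(m + 1) ^ 2 * (m - 1) / (m ^ 3 * (m - 1)) = (1 / m) * (1 + 1 / m) ^ 2"
    using assms by (simp add: field_simps power2_eq_square power3_eq_cube)
  ultimately show ?thesis by simp
qed

lemma inverse_sqrt_pred_le_add_cube:
  fixes m :: real
  assumes "m \<ge> 2"
  shows "1 / sqrt (m - 1) \<le> 1 / sqrt m + (1 / sqrt m) ^ 3"
proof -
  define b where "b = 1 / sqrt m"
  have "b > 0" using assms by (simp add: b_def)
  have "(b + b ^ 3) ^ 2 = b ^ 2 * (1 + b ^ 2) ^ 2"
    by (simp add: power2_eq_square power3_eq_cube algebra_simps)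
  also have "\<dots> = (1 / m) * (1 + 1 / m) ^ 2"
    using assms by (simp add: b_def power_divide)
  finally have square: "(b + b ^ 3) ^ 2 = (1 / m) * (1 + 1 / m) ^ 2" .
  have "1 / sqrt (m - 1) = sqrt (1 / (m - 1))"
    by (simp add: real_sqrt_divide)
  also have "\<dots> \<le> sqrt ((b + b ^ 3) ^ 2)"
    using inverse_square_pred_le[OF assms] square by simp
  also have "\<dots> = b + b ^ 3"
    using \<open>b > 0\<close> by simp
  finally show ?thesis by (simp add: b_def)
qed

lemma add_cube_recurrence_lower_bound:
  fixes K :: nat and \<gamma> :: "nat \<Rightarrow> real"
  assumes start: "\<gamma> 0 \<ge> 1 / sqrt (real K + 1)"
    and step: "\<And>k. k < K \<Longrightarrow> \<gamma> (k + 1) \<ge> \<gamma> k + \<gamma> k ^ 3"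
    and "k \<le> K"
  shows "\<gamma> k \<ge> 1 / sqrt (real K + 1 - real k)"
  using \<open>k \<le> K\<close>
proof (induction k)
  case 0
  then show ?case using start by simp
next
  case (Suc k)
  define m where "m = real K + 1 - real k"
  have "m \<ge> 2" using Suc.prems by (simp add: m_def)
  have IH: "\<gamma> k \<ge> 1 / sqrt m" using Suc by (simp add: m_def)
  have "1 / sqrt (real K + 1 - real (Suc k)) = 1 / sqrt (m - 1)"
    by (simp add: m_def algebra_simps)
  also have "\<dots> \<le> 1 / sqrt m + (1 / sqrt m) ^ 3"
    using inverse_sqrt_pred_le_add_cube[OF \<open>m \<ge> 2\<close>] .
  also have "\<dots> \<le> \<gamma> k + \<gamma> k ^ 3"
    using add_cube_mono[OF _ IH] \<open>m \<ge> 2\<close> by simp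
  also have "\<dots> \<le> \<gamma> (Suc k)"
    using step[of k] Suc.prems by simp
  finally show ?case .
qed

theorem mainTheorem10:
  fixes K :: nat and \<gamma> :: "nat \<Rightarrow> real" and \<beta> :: "nat \<Rightarrow> real"
  assumes "K > 0"
    and "\<And>k. k \<le> K \<Longrightarrow> \<beta> k = (real K + 1 - real k) powr (-1/2)"
    and "\<gamma> 0 \<ge> \<beta> 0"
    and "\<And>k. k \<le> K - 1 \<Longrightarrow> \<gamma> (k+1) \<ge> \<gamma> k + \<gamma> k ^ 3"
  shows "\<forall>k \<le> K. \<gamma> k \<ge> \<beta> k"
proof (intro allI impI)
  fix k assume "k \<le> K"
  have powr_eq: "x powr (-1/2) = 1 / sqrt x" if "x > 0" for x :: real
    using that by (simp add: powr_minus_divide powr_half_sqrt)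
  have "\<beta> k = 1 / sqrt (real K + 1 - real k)"
    using assms(2)[OF \<open>k \<le> K\<close>] \<open>k \<le> K\<close> powr_eq by simp
  also have "\<dots> \<le> \<gamma> k"
  proof (rule add_cube_recurrence_lower_bound)
    show "\<gamma> 0 \<ge> 1 / sqrt (real K + 1)"
      using assms(2)[of 0] assms(3) powr_eq[of "real K + 1"] by simp
    show "\<gamma> (j + 1) \<ge> \<gamma> j + \<gamma> j ^ 3" if "j < K" for j
      using assms(4) that by simp
  qed fact
  finally show "\<gamma> k \<ge> \<beta> k" .
qed

end
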